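(* Let $w\in\mathcal T$ be a word of length $\ell$ and let $p_x,p_y$ be Gaussian integers with $\max\{\|p_x\|,\|p_y\|\}>\ell$. Then $I_{p_x,p_y}(w)$ is trivial.
   Context: For a Gaussian integer $p$, $\|p\|=\max\{|\mathrm{Re}\,p|,|\mathrm{Im}\,p|\}$. Let $F_2^{(a)},F_2^{(b)},F_2^{(c)}$ be free groups on $a_1,a_2$; $b_1,b_2$; $c_1,c_2$, let $\psi\colon F_2^{(a)}\times F_2^{(b)}\times F_2^{(c)}\to\mathbb Z^2$ send $a_i,b_i,c_i\mapsto e_i$, and $K=\ker\psi$, generated by $x_i=a_ic_i^{-1}$, $y_i=b_ic_i^{-1}$. $\mathcal T\subseteq F(x_1,x_2,y_1,y_2)$ is the set of elements representing the identity of $K$. $\mathrm{Conf}_2(X)=\{(z_1,z_2)\in X^2:z_1\ne z_2\}$. For Gaussian integers $p_x,p_y$ put $\hat p_x=p_x-(\tfrac13+\tfrac13 i)$, $\hat p_y=p_y+(\tfrac13+\tfrac13i)$. For $w\in\mathcal T$ given by a word of length $\ell$, define $\gamma_x,\gamma_y\colon[0,1]\to\mathbb C$ with $\gamma_x(0)=\hat p_x$, $\gamma_y(0)=\hat p_y$, linear on each $[(k-1)/\ell,k/\ell]$: if the $k$-th letter is $x_1^\delta$ (resp. $x_2^\delta$), $\delta=\pm1$, $\gamma_x$ moves by $\delta$ (resp. $i\delta$) and $\gamma_y$ is constant; if it is $y_1^\delta$ (resp. $y_2^\delta$), $\gamma_y$ moves by $-\delta$ (resp. $-i\delta$) and $\gamma_x$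 is constant. $(\gamma_x,\gamma_y)$ is a loop in $\mathrm{Conf}_2(\mathbb C\setminus\{0\})$ based at $(\hat p_x,\hat p_y)$, and $I_{p_x,p_y}(w)$ is its class in $\pi_1(\mathrm{Conf}_2(\mathbb C\setminus\{0\}),(\hat p_x,\hat p_y))$ (independent of the word chosen for $w$). *)

theory Defs
  imports "HOL-Analysis.Analysis"
begin

text \<open>A letter is a generator together
with an exponent sign: True means exponent +1, False means exponent -1.
A word is a list of letters (not necessarily freely reduced).\<close>

datatype gen = X1 | X2 | Y1 | Y2

type_synonym letter = "gen \<times> bool"

definition cancel1 :: "('a \<times> bool) list \<Rightarrow> ('a \<times> bool) list \<Rightarrow> bool" where
  "cancel1 u v \<longleftrightarrow> (\<exists>a b g e. u = a @ [(g, e), (g, \<not> e)] @ b \<and> v = a @ b)"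

definition free_trivial :: "('a \<times> bool) list \<Rightarrow> bool" where
  "free_trivial w \<longleftrightarrow> cancel1\<^sup>*\<^sup>* w []"

text \<open>Images of a word under the inclusion K \<subseteq> F2^(a) x F2^(b) x F2^(c),
x_i = a_i c_i^{-1}, y_i = b_i c_i^{-1}. Generators a_i, b_i, c_i are encoded by the index i.\<close>
fun gen_idx :: "gen \<Rightarrow> nat" where
  "gen_idx X1 = 1" | "gen_idx X2 = 2" | "gen_idx Y1 = 1" | "gen_idx Y2 = 2"

fun is_x :: "gen \<Rightarrow> bool" where
  "is_x X1 = True" | "is_x X2 = True" | "is_x Y1 = False" | "is_x Y2 = False"

definition proj_a :: "letter list \<Rightarrow> (nat \<times> bool) list" where
  "proj_a w = map (\<lambda>(g, e). (gen_idx g, e)) (filter (\<lambda>(g, e). is_x g) w)"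

definition proj_b :: "letter list \<Rightarrow> (nat \<times> bool) list" where
  "proj_b w = map (\<lambda>(g, e). (gen_idx g, e)) (filter (\<lambda>(g, e). \<not> is_x g) w)"

definition proj_c :: "letter list \<Rightarrow> (nat \<times> bool) list" where
  "proj_c w = map (\<lambda>(g, e). (gen_idx g, \<not> e)) w"

text \<open>The set T: words representing the identity of K (equivalently, of the direct product).\<close>
definition in_T :: "letter list \<Rightarrow> bool" where
  "in_T w \<longleftrightarrow> free_trivial (proj_a w) \<and> free_trivial (proj_b w) \<and> free_trivial (proj_c w)"

definition gaussian_int :: "complex \<Rightarrow> bool" where
  "gaussian_int p \<longleftrightarrow> Re p \<in> \<int> \<and> Im p \<in> \<int>"

definition gnorm :: "complex \<Rightarrow> real" where
  "gnorm p = max \<bar>Re p\<bar> \<bar>Im p\<bar>"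

definition sgn_b :: "bool \<Rightarrow> complex" where
  "sgn_b e = (if e then 1 else -1)"

fun step_x :: "letter \<Rightarrow> complex" where
  "step_x (X1, e) = sgn_b e"
| "step_x (X2, e) = \<i> * sgn_b e"
| "step_x (Y1, e) = 0"
| "step_x (Y2, e) = 0"

fun step_y :: "letter \<Rightarrow> complex" where
  "step_y (Y1, e) = - sgn_b e"
| "step_y (Y2, e) = - \<i> * sgn_b e"
| "step_y (X1, e) = 0"
| "step_y (X2, e) = 0"

definition vertex :: "(letter \<Rightarrow> complex) \<Rightarrow> complex \<Rightarrow> letter list \<Rightarrow> nat \<Rightarrow> complex" where
  "vertex st z w k = z + sum_list (map st (take k w))"

definition pl_path :: "(letter \<Rightarrow> complex) \<Rightarrow> complex \<Rightarrow> letter list \<Rightarrow> real \<Rightarrow> complex" where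
  "pl_path st z w t =
     (let l = length w; s = t * real l; k = min (nat \<lfloor>s\<rfloor>) (l - 1) in
      vertex st z w k + of_real (s - real k) * (vertex st z w (Suc k) - vertex st z w k))"

definition hat_x :: "complex \<Rightarrow> complex" where
  "hat_x p = p - (1/3 + \<i>/3)"

definition hat_y :: "complex \<Rightarrow> complex" where
  "hat_y p = p + (1/3 + \<i>/3)"

definition gamma :: "complex \<Rightarrow> complex \<Rightarrow> letter list \<Rightarrow> real \<Rightarrow> complex \<times> complex" where
  "gamma px py w t = (pl_path step_x (hat_x px) w t, pl_path step_y (hat_y py) w t)"

definition Conf2_punct :: "(complex \<times> complex) set" where
  "Conf2_punct = {(z1, z2). z1 \<noteq> 0 \<and> z2 \<noteq> 0 \<and> z1 \<noteq> z2}"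

definition I_trivial :: "complex \<Rightarrow> complex \<Rightarrow> letter list \<Rightarrow> bool" where
  "I_trivial px py w \<longleftrightarrow>
     homotopic_loops Conf2_punct (gamma px py w) (linepath (hat_x px, hat_y py) (hat_x px, hat_y py))"

end

theory Submission
  imports Defs
begin

(* Each of gamma_x, gamma_y and gamma_x - gamma_y is a polygonal loop whose edge word is the
   image of a freely trivial word (the projections of w to the three free factors a, b and c).
   Removing zero edges and flattening backtracks are homotopies of a polygon inside its own
   image, so each of these three loops contracts inside its own image.  All three run along
   integer grid lines and start at points with coordinates in 1/3 + Z or 2/3 + Z, hence never
   hit 0, so (gamma_x, gamma_y) lies in Conf_2(C - {0}).  A closed polygon of length L stays in
   the ball of radius L/2 about its base point, and the lengths L_x, L_y of gamma_x, gamma_y add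
   up to l.  Say |p_x| > l, so |p_x| >= l + 1 by integrality.  If the balls about the two base
   points are disjoint, slide gamma_x to its base point inside its ball and then contract
   gamma_y inside its image.  Otherwise the ball of radius L_x/2 + L_y <= l about the base point
   of gamma_x misses 0 and contains both loops, so slide both points, keeping their difference,
   until gamma_y is constant, and then contract gamma_x - gamma_y. *)

section \<open>Polygonal walks\<close>

definition ramp :: "real \<Rightarrow> real" where
  "ramp x = max 0 (min 1 x)"

lemma ramp_simps:
  "x \<le> 0 \<Longrightarrow> ramp x = 0" "1 \<le> x \<Longrightarrow> ramp x = 1" "0 \<le> x \<Longrightarrow> x \<le> 1 \<Longrightarrow> ramp x = x"
  "0 \<le> ramp x" "ramp x \<le> 1"
  by (auto simp: ramp_def)

lemma ramp_tent: "0 \<le> ramp x - ramp (x - 1)" "ramp x - ramp (x - 1) \<le> 1"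
  by (auto simp: ramp_def)

lemma continuous_on_ramp [continuous_intros]:
  "continuous_on S f \<Longrightarrow> continuous_on S (\<lambda>x. ramp (f x))"
  unfolding ramp_def by (intro continuous_intros)

text \<open>The point reached at time \<open>x\<close> by the polygon with edge vectors \<open>vs\<close>, each edge
  being traversed in one unit of time.\<close>
fun interp_sum :: "'a::real_normed_vector list \<Rightarrow> real \<Rightarrow> 'a" where
  "interp_sum [] x = 0"
| "interp_sum (v # vs) x = ramp x *\<^sub>R v + interp_sum vs (x - 1)"

definition walk :: "'a::real_normed_vector \<Rightarrow> 'a list \<Rightarrow> real \<Rightarrow> 'a" where
  "walk z vs t = z + interp_sum vs (t * real (length vs))"

lemma interp_sum_nonpos: "x \<le> 0 \<Longrightarrow> interp_sum vs x = 0"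
  by (induction vs arbitrary: x) (auto simp: ramp_simps)

lemma interp_sum_ge_length: "real (length vs) \<le> x \<Longrightarrow> interp_sum vs x = sum_list vs"
  by (induction vs arbitrary: x) (auto simp: ramp_simps)

lemma interp_sum_append:
  "interp_sum (us @ vs) x = interp_sum us x + interp_sum vs (x - real (length us))"
  by (induction us arbitrary: x) (auto simp: algebra_simps)

lemma interp_sum_on_edge:
  assumes "k < length vs" "real k \<le> x" "x \<le> real k + 1"
  shows "interp_sum vs x = sum_list (take k vs) + (x - real k) *\<^sub>R vs ! k"
  using assms
proof (induction vs arbitrary: x k)
  case Nil then show ?case by simp
next
  case (Cons v vs)
  show ?case
  proof (cases k)
    case 0
    then show ?thesis using Cons.prems by (simp add: interp_sum_nonpos ramp_simps)
  next
    case (Suc m)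
    then have "interp_sum vs (x - 1) = sum_list (take m vs) + (x - 1 - real m) *\<^sub>R vs ! m"
      using Cons.prems by (intro Cons.IH) auto
    moreover have "ramp x = 1" using Cons.prems Suc by (simp add: ramp_simps)
    ultimately show ?thesis using Suc by (simp add: algebra_simps)
  qed
qed

lemma continuous_on_interp_sum [continuous_intros]:
  "continuous_on S f \<Longrightarrow> continuous_on S (\<lambda>x. interp_sum vs (f x))"
proof (induction vs arbitrary: f)
  case (Cons v vs)
  have "continuous_on S (\<lambda>x. interp_sum vs (f x - 1))"
    using Cons by (intro Cons.IH continuous_intros)
  with Cons.prems show ?case by (auto intro!: continuous_intros)
qed simp

lemma path_walk: "path (walk z vs)"
  unfolding path_def walk_def by (intro continuous_intros)

lemma pathstart_walk [simp]: "pathstart (walk z vs) = z"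
  by (simp add: pathstart_def walk_def interp_sum_nonpos)

lemma pathfinish_walk [simp]: "pathfinish (walk z vs) = z + sum_list vs"
  by (simp add: pathfinish_def walk_def interp_sum_ge_length)

lemma walk_Nil [simp]: "walk z [] = (\<lambda>_. z)"
  by (simp add: walk_def fun_eq_iff)

lemma walk_diff:
  "walk z1 (map f xs) t - walk z2 (map g xs) t = walk (z1 - z2) (map (\<lambda>x. f x - g x) xs) t"
proof -
  have "interp_sum (map f xs) s - interp_sum (map g xs) s = interp_sum (map (\<lambda>x. f x - g x) xs) s"
    for s
    by (induction xs arbitrary: s) (simp_all add: algebra_simps)
  then show ?thesis by (simp add: walk_def algebra_simps)
qed

lemma pl_path_eq_walk:
  assumes "t \<in> {0..1}"
  shows "pl_path st z w t = walk z (map st w) t"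
proof (cases "w = []")
  case True then show ?thesis by (simp add: pl_path_def vertex_def)
next
  case False
  define s where "s = t * real (length w)"
  define k where "k = min (nat \<lfloor>s\<rfloor>) (length w - 1)"
  have s: "0 \<le> s" "s \<le> real (length w)"
    using assms by (auto simp: s_def intro: mult_left_le_one_le)
  have n: "0 < length w" using False by simp
  have k: "k < length w" "real k \<le> s" "s \<le> real k + 1"
  proof -
    show "k < length w" using n by (simp add: k_def min_less_iff_disj)
    show "real k \<le> s" using s by (simp add: k_def) linarith
    show "s \<le> real k + 1"
    proof (cases "nat \<lfloor>s\<rfloor> \<le> length w - 1")
      case True then show ?thesis using s by (simp add: k_def)
    next
      case False then show ?thesis using s n by (simp add: k_def of_nat_diff)
    qed
  qed
  have "pl_path st z w t = vertex st z w k + (s - real k) *\<^sub>R (vertex st z w (Suc k) - vertex st z w k)"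
    by (simp add: pl_path_def Let_def s_def k_def scaleR_conv_of_real)
  also have "\<dots> = z + sum_list (take k (map st w)) + (s - real k) *\<^sub>R (map st w ! k)"
    using k by (simp add: vertex_def take_Suc_conv_app_nth take_map)
  also have "\<dots> = walk z (map st w) t"
    using interp_sum_on_edge[of k "map st w" s] k by (simp add: walk_def s_def)
  finally show ?thesis .
qed

section \<open>Contracting walks by free reduction\<close>

lemma path_image_reparametrize:
  assumes "continuous_on {0..1} f" "f \<in> {0..1} \<rightarrow> {0..1}" "f 0 = 0" "f 1 = 1"
    and "\<And>t. t \<in> {0..1} \<Longrightarrow> q t = p (f t)"
  shows "path_image q = path_image p"
proof -
  have "{0..1} \<subseteq> f ` {0..1}"
    using IVT'[of f 0 _ 1] assms(1,3,4) by (fastforce simp: image_iff)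
  with assms(2) have "f ` {0..1} = {0..1}" by auto
  moreover have "q ` {0..1} = p ` f ` {0..1}"
    unfolding image_image using assms(5) by (intro image_cong) auto
  ultimately show ?thesis by (simp add: path_image_def)
qed

lemma walk_remove_zero_reparametrization:
  obtains f where "continuous_on {0..1} f" "f \<in> {0..1} \<rightarrow> {0..1}" "f 0 = 0" "f 1 = 1"
    "\<And>t. walk z (A @ [0] @ B) t = walk z (A @ B) (f t)"
proof (cases "A @ B = []")
  case True
  then show ?thesis by (intro that[of id]) (auto simp: walk_def ramp_def)
next
  case False
  define j where "j = real (length A)"
  define n where "n = real (length (A @ B))"
  have n: "0 < n" using False unfolding n_def by (metis length_greater_0_conv of_nat_0_less_iff)
  have jn: "0 \<le> j" "j \<le> n" by (simp_all add: j_def n_def)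
  \<comment> \<open>\<open>\<psi>\<close> pauses during the unit of time in which the zero edge is traversed.\<close>
  define \<psi> where "\<psi> x = min x j + max 0 (x - (j + 1))" for x :: real
  have \<psi>_range: "0 \<le> \<psi> x \<and> \<psi> x \<le> n" if "0 \<le> x" "x \<le> n + 1" for x
    using that jn by (auto simp: \<psi>_def min_def max_def)
  have skip: "interp_sum (A @ [0] @ B) x = interp_sum (A @ B) (\<psi> x)" for x
  proof -
    have "interp_sum A (\<psi> x) = interp_sum A x"
      by (cases "x \<le> j") (simp_all add: \<psi>_def interp_sum_ge_length j_def)
    moreover have "interp_sum B (\<psi> x - j) = interp_sum B (x - 1 - j)"
      by (cases "x \<le> j + 1") (simp_all add: \<psi>_def interp_sum_nonpos algebra_simps)
    ultimately show ?thesis by (simp add: interp_sum_append j_def algebra_simps)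
  qed
  show ?thesis
  proof (rule that[of "\<lambda>t. \<psi> (t * (n + 1)) / n"])
    show "continuous_on {0..1} (\<lambda>t. \<psi> (t * (n + 1)) / n)"
      unfolding \<psi>_def using n by (intro continuous_intros) auto
    show "(\<lambda>t. \<psi> (t * (n + 1)) / n) \<in> {0..1} \<rightarrow> {0..1}"
      using n \<psi>_range by (auto intro: mult_left_le_one_le)
    show "\<psi> (0 * (n + 1)) / n = 0" "\<psi> (1 * (n + 1)) / n = 1"
      using jn n by (simp_all add: \<psi>_def)
    show "walk z (A @ [0] @ B) t = walk z (A @ B) (\<psi> (t * (n + 1)) / n)" for t
      using skip n by (simp add: walk_def n_def add.commute)
  qed
qed

lemma walk_flatten_backtrack:
  fixes A B :: "'a::real_normed_vector list" and c :: 'a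
  defines "vs \<equiv> A @ [c, -c] @ B" and "vs' \<equiv> A @ [0, 0] @ B"
  shows "homotopic_paths (path_image (walk z vs)) (walk z vs) (walk z vs')"
proof -
  define j where "j = real (length A)"
  define n where "n = real (length vs)"
  have jn: "0 \<le> j" "j + 2 \<le> n" by (simp_all add: j_def n_def vs_def)
  define g where "g x = (ramp (x - j) - ramp (x - j - 1)) *\<^sub>R c" for x
  have g_outside: "g x = 0" if "x \<le> j \<or> j + 2 \<le> x" for x
    using that by (auto simp: g_def ramp_simps)
  have walk_split: "walk z vs t = walk z vs' t + g (t * n)" for t
    by (simp add: walk_def vs_def vs'_def n_def j_def g_def interp_sum_append algebra_simps)
  \<comment> \<open>\<open>H\<close> retracts the spike \<open>c, -c\<close> to its foot; every intermediate point lies on the spike.\<close>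
  define H where "H p = walk z vs' (snd p) + (1 - fst p) *\<^sub>R g (snd p * n)" for p :: "real \<times> real"
  have "H (s, t) \<in> path_image (walk z vs)" if st: "s \<in> {0..1}" "t \<in> {0..1}" for s t
  proof (cases "t * n \<le> j \<or> j + 2 \<le> t * n")
    case True
    then have "H (s, t) = walk z vs t" by (simp add: H_def walk_split g_outside)
    then show ?thesis using st by (simp add: path_image_def)
  next
    case False
    define \<mu> where "\<mu> = (1 - s) * (ramp (t * n - j) - ramp (t * n - j - 1))"
    have \<mu>: "0 \<le> \<mu>" "\<mu> \<le> 1"
      using st ramp_tent[of "t * n - j"] by (auto simp: \<mu>_def intro!: mult_le_one)
    have "interp_sum A (t * n) = sum_list A" "interp_sum B (t * n - j - 2) = 0"
      using False by (simp_all add: interp_sum_ge_length interp_sum_nonpos flip: j_def)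
    then have "walk z vs' t = z + sum_list A"
      by (simp add: walk_def vs'_def interp_sum_append n_def vs_def flip: j_def)
    then have "H (s, t) = z + sum_list A + \<mu> *\<^sub>R c"
      by (simp add: H_def g_def \<mu>_def)
    also have "\<dots> = z + interp_sum vs (j + \<mu>)"
      using \<mu> by (simp add: vs_def interp_sum_append interp_sum_ge_length interp_sum_nonpos
          ramp_simps flip: j_def)
    also have "\<dots> = walk z vs ((j + \<mu>) / n)"
      using jn by (simp add: walk_def flip: n_def)
    finally show ?thesis
      using \<mu> jn by (auto simp: path_image_def)
  qed
  moreover have "continuous_on ({0..1} \<times> {0..1}) H"
    unfolding H_def walk_def g_def by (intro continuous_intros)
  moreover have "H (0, t) = walk z vs t" "H (1, t) = walk z vs' t" for t
    by (simp_all add: H_def walk_split)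
  moreover have "pathstart (H \<circ> Pair s) = pathstart (walk z vs)"
    and "pathfinish (H \<circ> Pair s) = pathfinish (walk z vs)" for s
    using jn g_outside[of 0] g_outside[of n]
    by (simp_all add: H_def pathstart_def pathfinish_def walk_split)
  ultimately show ?thesis
    unfolding homotopic_paths by (intro exI[of _ H]) auto
qed

text \<open>A backtrack \<open>c, -c\<close> is flattened to two zero edges rather than deleted, so that
  the homotopy keeps the parametrisation; zero edges are then removed by reparametrising.\<close>
definition edge_reduction :: "'a::real_normed_vector list \<Rightarrow> 'a list \<Rightarrow> bool" where
  "edge_reduction u v \<longleftrightarrow>
     (\<exists>A B. u = A @ [0] @ B \<and> v = A @ B) \<or> (\<exists>A B c. u = A @ [c, -c] @ B \<and> v = A @ [0, 0] @ B)"

lemma edge_reductions_sum_list: "edge_reduction\<^sup>*\<^sup>* u v \<Longrightarrow> sum_list u = sum_list v"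
  by (induction rule: rtranclp_induct) (auto simp: edge_reduction_def)

lemma edge_reduction_walk_homotopic:
  assumes "edge_reduction vs vs'"
  shows "path_image (walk z vs') \<subseteq> path_image (walk z vs)"
    and "homotopic_paths (path_image (walk z vs)) (walk z vs) (walk z vs')"
proof -
  have "path_image (walk z vs') \<subseteq> path_image (walk z vs) \<and>
        homotopic_paths (path_image (walk z vs)) (walk z vs) (walk z vs')"
    using assms unfolding edge_reduction_def
  proof (elim disjE exE conjE)
    fix A B assume vs: "vs = A @ [0] @ B" "vs' = A @ B"
    obtain f where f: "continuous_on {0..1} f" "f \<in> {0..1} \<rightarrow> {0..1}" "f 0 = 0" "f 1 = 1"
      "\<And>t. walk z vs t = walk z vs' (f t)"
      using walk_remove_zero_reparametrization[of z A B] unfolding vs by blast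
    have "path_image (walk z vs) = path_image (walk z vs')"
      using path_image_reparametrize[OF f(1-4)] f(5) by blast
    moreover have "homotopic_paths (path_image (walk z vs')) (walk z vs') (walk z vs)"
      using homotopic_paths_reparametrize[OF path_walk order_refl f(1-4)] f(5) by blast
    ultimately show ?thesis by (simp add: homotopic_paths_sym)
  next
    fix A B c assume vs: "vs = A @ [c, -c] @ B" "vs' = A @ [0, 0] @ B"
    have "homotopic_paths (path_image (walk z vs)) (walk z vs) (walk z vs')"
      unfolding vs by (rule walk_flatten_backtrack)
    then show ?thesis using homotopic_paths_imp_subset by blast
  qed
  then show "path_image (walk z vs') \<subseteq> path_image (walk z vs)"
    and "homotopic_paths (path_image (walk z vs)) (walk z vs) (walk z vs')" by auto
qed

lemma edge_reductions_walk_null: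
  assumes "edge_reduction\<^sup>*\<^sup>* vs []"
  shows "homotopic_loops (path_image (walk z vs)) (walk z vs) (\<lambda>_. z)"
  using assms
proof (induction rule: converse_rtranclp_induct)
  case base
  then show ?case by (simp add: homotopic_loops_refl path_def path_image_def pathstart_def pathfinish_def)
next
  case (step vs vs')
  have "sum_list vs' = 0" "sum_list vs = 0"
    using edge_reductions_sum_list[OF step(2)]
      edge_reductions_sum_list[OF converse_rtranclp_into_rtranclp[OF step(1,2)]] by simp_all
  then have "homotopic_loops (path_image (walk z vs)) (walk z vs) (walk z vs')"
    using edge_reduction_walk_homotopic(2)[OF step(1)]
    by (intro homotopic_paths_imp_homotopic_loops) simp_all
  moreover have "homotopic_loops (path_image (walk z vs)) (walk z vs') (\<lambda>_. z)"
    using homotopic_loops_subset[OF step(3) edge_reduction_walk_homotopic(1)[OF step(1)]] .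
  ultimately show ?case by (rule homotopic_loops_trans)
qed

lemma edge_reduction_Cons:
  assumes "edge_reduction u v"
  shows "edge_reduction (x # u) (x # v)"
  using assms unfolding edge_reduction_def
proof (elim disjE exE conjE)
  fix A B assume "u = A @ [0] @ B" "v = A @ B"
  then show "(\<exists>A B. x # u = A @ [0] @ B \<and> x # v = A @ B) \<or>
    (\<exists>A B c. x # u = A @ [c, -c] @ B \<and> x # v = A @ [0, 0] @ B)"
    by (intro disjI1 exI[of _ "x # A"] exI[of _ B]) simp
next
  fix A B c assume "u = A @ [c, -c] @ B" "v = A @ [0, 0] @ B"
  then show "(\<exists>A B. x # u = A @ [0] @ B \<and> x # v = A @ B) \<or>
    (\<exists>A B c. x # u = A @ [c, -c] @ B \<and> x # v = A @ [0, 0] @ B)"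
    by (intro disjI2 exI[of _ "x # A"] exI[of _ B] exI[of _ c]) simp
qed

lemma edge_reductions_Cons: "edge_reduction\<^sup>*\<^sup>* u v \<Longrightarrow> edge_reduction\<^sup>*\<^sup>* (x # u) (x # v)"
  by (induction rule: rtranclp_induct) (auto intro: rtranclp.rtrancl_into_rtrancl edge_reduction_Cons)

lemma edge_reductions_remove_zeros: "edge_reduction\<^sup>*\<^sup>* vs (filter (\<lambda>v. v \<noteq> 0) vs)"
proof (induction vs)
  case (Cons v vs)
  have "edge_reduction (0 # vs) vs"
    unfolding edge_reduction_def by (intro disjI1 exI[of _ "[]"] exI[of _ vs]) simp
  then show ?case
    using Cons edge_reductions_Cons[OF Cons, of v] converse_rtranclp_into_rtranclp[of _ "0 # vs" vs]
    by (cases "v = 0") simp_all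
qed simp

lemma free_trivial_edge_reductions:
  assumes odd: "\<And>g e. f (g, \<not> e) = - f (g, e)" and "free_trivial u"
  shows "edge_reduction\<^sup>*\<^sup>* (map f u) []"
proof -
  have lift: "edge_reduction\<^sup>*\<^sup>* (map f u) (map f v)" if "cancel1 u v" for u v
  proof -
    obtain a b g e where uv: "u = a @ [(g, e), (g, \<not> e)] @ b" "v = a @ b"
      using \<open>cancel1 u v\<close> unfolding cancel1_def by blast
    define c where "c = f (g, e)"
    have "edge_reduction (map f u) (map f a @ [0, 0] @ map f b)"
      unfolding edge_reduction_def uv using odd
      by (intro disjI2 exI[of _ "map f a"] exI[of _ "map f b"] exI[of _ c]) (simp add: c_def)
    moreover have "edge_reduction (map f a @ [0, 0] @ map f b) (map f a @ [0] @ map f b)"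
      unfolding edge_reduction_def by (intro disjI1 exI[of _ "map f a"] exI[of _ "0 # map f b"]) simp
    moreover have "edge_reduction (map f a @ [0] @ map f b) (map f v)"
      unfolding edge_reduction_def uv by (intro disjI1 exI[of _ "map f a"] exI[of _ "map f b"]) simp
    ultimately show ?thesis by (meson converse_rtranclp_into_rtranclp rtranclp.rtrancl_refl)
  qed
  have "cancel1\<^sup>*\<^sup>* u []" using \<open>free_trivial u\<close> by (simp add: free_trivial_def)
  then have "edge_reduction\<^sup>*\<^sup>* (map f u) (map f [])"
  proof (induction rule: rtranclp_induct)
    case (step v w)
    then show ?case using rtranclp_trans[OF step.IH lift[OF step.hyps(2)]] by simp
  qed simp
  then show ?thesis by simp
qed

section \<open>Where closed walks can go\<close>

lemma norm_interp_sum_add_remainder: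
  "norm (interp_sum vs x) + norm (sum_list vs - interp_sum vs x) \<le> sum_list (map norm vs)"
proof (induction vs arbitrary: x)
  case (Cons v vs)
  have "norm (interp_sum (v # vs) x) \<le> ramp x * norm v + norm (interp_sum vs (x - 1))"
    using norm_triangle_ineq[of "ramp x *\<^sub>R v"] ramp_simps(4) by simp
  moreover have "sum_list (v # vs) - interp_sum (v # vs) x
      = (1 - ramp x) *\<^sub>R v + (sum_list vs - interp_sum vs (x - 1))"
    by (simp add: algebra_simps)
  then have "norm (sum_list (v # vs) - interp_sum (v # vs) x)
      \<le> (1 - ramp x) * norm v + norm (sum_list vs - interp_sum vs (x - 1))"
    using norm_triangle_ineq[of "(1 - ramp x) *\<^sub>R v"] ramp_simps(5)[of x] by (simp only:) simp
  ultimately show ?case using Cons.IH[of "x - 1"] by (simp add: algebra_simps)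
qed simp

text \<open>Any point of a closed walk splits it into two arcs from the base point, each at least as
  long as the distance to that point.\<close>
lemma path_image_closed_walk:
  assumes "sum_list vs = 0"
  shows "path_image (walk z vs) \<subseteq> cball z (sum_list (map norm vs) / 2)"
proof -
  have "dist z (walk z vs t) \<le> sum_list (map norm vs) / 2" for t
    using norm_interp_sum_add_remainder[of vs "t * real (length vs)"] assms
    by (simp add: walk_def dist_norm)
  then show ?thesis by (auto simp: path_image_def)
qed

definition axis_steps :: "complex set" where
  "axis_steps = {0, 1, -1, \<i>, -\<i>}"

lemma interp_sum_on_grid_lines:
  assumes "set vs \<subseteq> axis_steps"
  shows "Re (interp_sum vs x) \<in> \<int> \<or> Im (interp_sum vs x) \<in> \<int>"
  using assms
proof (induction vs arbitrary: x)
  case (Cons v vs)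
  have v: "Re v \<in> \<int>" "Im v \<in> \<int>" "Re v = 0 \<or> Im v = 0"
    using Cons.prems by (auto simp: axis_steps_def)
  show ?case
  proof (cases "x \<le> 1")
    case True
    then have "interp_sum (v # vs) x = ramp x *\<^sub>R v" by (simp add: interp_sum_nonpos)
    then show ?thesis using v(3) by auto
  next
    case False
    then have "interp_sum (v # vs) x = v + interp_sum vs (x - 1)" by (simp add: ramp_simps)
    then show ?thesis using Cons v by auto
  qed
qed simp

lemma walk_nonzero_off_grid:
  assumes "Re z \<notin> \<int>" "Im z \<notin> \<int>" "set vs \<subseteq> axis_steps"
  shows "walk z vs t \<noteq> 0"
proof
  assume "walk z vs t = 0"
  then have "interp_sum vs (t * real (length vs)) = - z" by (simp add: walk_def add_eq_0_iff)
  then show False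
    using interp_sum_on_grid_lines[OF assms(3), of "t * real (length vs)"] assms(1,2) by simp
qed

section \<open>Contracting loops of pairs of points\<close>

definition punctured_conf2 :: "('a::real_normed_vector \<times> 'a) set" where
  "punctured_conf2 = {(z1, z2). z1 \<noteq> 0 \<and> z2 \<noteq> 0 \<and> z1 \<noteq> z2}"

lemma Conf2_punct_eq: "Conf2_punct = punctured_conf2"
  unfolding Conf2_punct_def punctured_conf2_def ..

lemma homotopic_loops_pair_null_separated:
  fixes a b :: "real \<Rightarrow> 'a::real_normed_vector"
  assumes "path a" "pathfinish a = pathstart a"
    and "convex C" "path_image a \<subseteq> C" "0 \<notin> C" "C \<inter> path_image b = {}" "0 \<notin> path_image b"
    and null_b: "homotopic_loops (path_image b) b (\<lambda>_. pathstart b)"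
  shows "homotopic_loops punctured_conf2 (\<lambda>t. (a t, b t)) (\<lambda>_. (pathstart a, pathstart b))"
proof -
  have b: "path b" "pathfinish b = pathstart b"
    using homotopic_loops_imp_path[OF null_b] homotopic_loops_imp_loop[OF null_b] by auto
  have a0: "pathstart a \<in> C" using assms(4) by (auto simp: pathstart_in_path_image)
  have slice: "C \<times> {b t} \<subseteq> punctured_conf2" if "t \<in> {0..1}" for t
    using that assms(5-7) by (auto simp: punctured_conf2_def path_image_def)
  have "homotopic_loops punctured_conf2 (\<lambda>t. (a t, b t)) (\<lambda>t. (pathstart a, b t))"
    (is "homotopic_loops _ _ ?slide")
  proof (rule homotopic_loops_linear)
    fix t :: real assume t: "t \<in> {0..1}"
    have "a t \<in> C" using assms(4) t by (auto simp: path_image_def)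
    then have "closed_segment (a t, b t) (pathstart a, b t) \<subseteq> C \<times> {b t}"
      using a0 by (intro closed_segment_subset convex_Times assms(3) convex_singleton) auto
    then show "closed_segment (a t, b t) (pathstart a, b t) \<subseteq> punctured_conf2"
      using slice[OF t] by blast
  qed (use assms(1,2) b in \<open>auto simp: path_def pathstart_def pathfinish_def intro!: continuous_intros\<close>)
  moreover have "homotopic_loops punctured_conf2 ((\<lambda>z. (pathstart a, z)) \<circ> b)
      ((\<lambda>z. (pathstart a, z)) \<circ> (\<lambda>_. pathstart b))"
    using a0 assms(5-7)
    by (intro homotopic_loops_continuous_image[OF null_b]) (auto simp: punctured_conf2_def intro!: continuous_intros)
  then have "homotopic_loops punctured_conf2 ?slide (\<lambda>_. (pathstart a, pathstart b))"
    by (simp add: o_def)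
  ultimately show ?thesis by (rule homotopic_loops_trans)
qed

text \<open>Slide both points inside \<open>C\<close>, keeping their difference, until the second one sits
  at its base point, and then contract the difference.\<close>
lemma homotopic_loops_pair_null_close:
  fixes a b :: "real \<Rightarrow> 'a::real_normed_vector"
  assumes "path a" "pathfinish a = pathstart a" "path b" "pathfinish b = pathstart b"
    and "convex C" "0 \<notin> C" "path_image a \<subseteq> C" "path_image b \<subseteq> C"
    and shifted: "\<And>t. t \<in> {0..1} \<Longrightarrow> pathstart b + (a t - b t) \<in> C"
    and distinct: "\<And>t. t \<in> {0..1} \<Longrightarrow> a t \<noteq> b t"
    and null_diff: "homotopic_loops (path_image (\<lambda>t. a t - b t)) (\<lambda>t. a t - b t)
      (\<lambda>_. pathstart a - pathstart b)"
  shows "homotopic_loops punctured_conf2 (\<lambda>t. (a t, b t)) (\<lambda>_. (pathstart a, pathstart b))"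
proof -
  have b0: "pathstart b \<in> C" using assms(8) by (auto simp: pathstart_in_path_image)
  have "homotopic_loops punctured_conf2 (\<lambda>t. (a t, b t)) (\<lambda>t. (pathstart b + (a t - b t), pathstart b))"
    (is "homotopic_loops _ _ ?slide")
  proof (rule homotopic_loops_linear)
    fix t :: real assume t: "t \<in> {0..1}"
    define S where "S = (C \<times> C) \<inter> {p. fst p - snd p = a t - b t}"
    have "convex {p :: 'a \<times> 'a. fst p - snd p = a t - b t}"
    proof (rule convexI)
      fix p q :: "'a \<times> 'a" and u v :: real
      assume "p \<in> {p. fst p - snd p = a t - b t}" "q \<in> {p. fst p - snd p = a t - b t}" "u + v = 1"
      moreover have "fst (u *\<^sub>R p + v *\<^sub>R q) - snd (u *\<^sub>R p + v *\<^sub>R q)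
          = u *\<^sub>R (fst p - snd p) + v *\<^sub>R (fst q - snd q)"
        by (simp add: algebra_simps)
      ultimately show "u *\<^sub>R p + v *\<^sub>R q \<in> {p. fst p - snd p = a t - b t}"
        by (simp flip: scaleR_add_left)
    qed
    then have "convex S" unfolding S_def using assms(5) by (intro convex_Int convex_Times)
    moreover have "(a t, b t) \<in> S" "(pathstart b + (a t - b t), pathstart b) \<in> S"
      using assms(7,8) shifted[OF t] b0 t by (auto simp: S_def path_image_def)
    ultimately have "closed_segment (a t, b t) (pathstart b + (a t - b t), pathstart b) \<subseteq> S"
      by (simp add: closed_segment_subset)
    moreover have "S \<subseteq> punctured_conf2"
      using assms(6) distinct[OF t] by (auto simp: S_def punctured_conf2_def)
    ultimately show "closed_segment (a t, b t) (pathstart b + (a t - b t), pathstart b) \<subseteq> punctured_conf2"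
      by blast
  qed (use assms(1-4) in \<open>auto simp: path_def pathstart_def pathfinish_def intro!: continuous_intros\<close>)
  moreover have "homotopic_loops punctured_conf2 ((\<lambda>z. (pathstart b + z, pathstart b)) \<circ> (\<lambda>t. a t - b t))
      ((\<lambda>z. (pathstart b + z, pathstart b)) \<circ> (\<lambda>_. pathstart a - pathstart b))"
    using b0 assms(6) shifted distinct
    by (intro homotopic_loops_continuous_image[OF null_diff])
      (force simp: punctured_conf2_def path_image_def intro!: continuous_intros)+
  then have "homotopic_loops punctured_conf2 ?slide (\<lambda>_. (pathstart a, pathstart b))"
    by (simp add: o_def)
  ultimately show ?thesis by (rule homotopic_loops_trans)
qed

lemma homotopic_loops_pair_null_far:
  fixes a b :: "real \<Rightarrow> 'a::real_normed_vector"
  assumes "path a" "pathfinish a = pathstart a"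
    and null_b: "homotopic_loops (path_image b) b (\<lambda>_. pathstart b)"
    and null_diff: "homotopic_loops (path_image (\<lambda>t. a t - b t)) (\<lambda>t. a t - b t)
      (\<lambda>_. pathstart a - pathstart b)"
    and a_ball: "path_image a \<subseteq> cball ca ra" and b_ball: "path_image b \<subseteq> cball cb rb"
    and far: "ra + 2 * rb < norm ca"
    and conf: "path_image (\<lambda>t. (a t, b t)) \<subseteq> punctured_conf2"
  shows "homotopic_loops punctured_conf2 (\<lambda>t. (a t, b t)) (\<lambda>_. (pathstart a, pathstart b))"
proof -
  have b: "path b" "pathfinish b = pathstart b"
    using homotopic_loops_imp_path[OF null_b] homotopic_loops_imp_loop[OF null_b] by auto
  have a_t: "dist ca (a t) \<le> ra" and b_t: "dist cb (b t) \<le> rb" if "t \<in> {0..1}" for t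
    using that a_ball b_ball by (auto simp: path_image_def image_subset_iff)
  have conf_t: "a t \<noteq> 0" "b t \<noteq> 0" "a t \<noteq> b t" if "t \<in> {0..1}" for t
    using that conf by (auto simp: path_image_def image_subset_iff punctured_conf2_def)
  have b0: "dist cb (pathstart b) \<le> rb" using b_t[of 0] by (simp add: pathstart_def)
  then have "0 \<le> rb" using zero_le_dist order_trans by blast
  show ?thesis
  proof (cases "ra + rb < dist ca cb")
    case True
    show ?thesis
    proof (rule homotopic_loops_pair_null_separated[OF assms(1,2) convex_cball a_ball _ _ _ null_b])
      show "0 \<notin> cball ca ra" using far \<open>0 \<le> rb\<close> by simp
      show "cball ca ra \<inter> path_image b = {}"
      proof (rule equals0I)
        fix x assume "x \<in> cball ca ra \<inter> path_image b"
        then have "dist ca x \<le> ra" "dist cb x \<le> rb" using b_ball by auto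
        then show False using True dist_triangle[of ca cb x] by (simp add: dist_commute)
      qed
      show "0 \<notin> path_image b" using conf_t(2) by (auto simp: path_image_def)
    qed
  next
    case False
    show ?thesis
    proof (rule homotopic_loops_pair_null_close[OF assms(1,2) b convex_cball _ _ _ _ _ null_diff])
      show "0 \<notin> cball ca (ra + 2 * rb)" using far by simp
      show "path_image a \<subseteq> cball ca (ra + 2 * rb)" using a_ball \<open>0 \<le> rb\<close> by auto
      show "path_image b \<subseteq> cball ca (ra + 2 * rb)"
      proof
        fix x assume "x \<in> path_image b"
        then have "dist cb x \<le> rb" using b_ball by auto
        then show "x \<in> cball ca (ra + 2 * rb)" using False dist_triangle[of ca x cb] by simp
      qed
      show "pathstart b + (a t - b t) \<in> cball ca (ra + 2 * rb)" if "t \<in> {0..1}" for t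
      proof -
        have "ca - (pathstart b + (a t - b t)) = (ca - a t) + (b t - pathstart b)"
          by (simp add: algebra_simps)
        then have "dist ca (pathstart b + (a t - b t)) \<le> dist ca (a t) + dist (b t) (pathstart b)"
          by (metis dist_norm norm_triangle_ineq)
        also have "\<dots> \<le> ra + 2 * rb"
          using a_t[OF that] b_t[OF that] b0 dist_triangle3[of "b t" "pathstart b" cb] by linarith
        finally show ?thesis by simp
      qed
    qed (use conf_t(3) in auto)
  qed
qed

lemma homotopic_loops_pair_null:
  fixes a b :: "real \<Rightarrow> 'a::real_normed_vector"
  assumes null_a: "homotopic_loops (path_image a) a (\<lambda>_. pathstart a)"
    and null_b: "homotopic_loops (path_image b) b (\<lambda>_. pathstart b)"
    and null_diff: "homotopic_loops (path_image (\<lambda>t. a t - b t)) (\<lambda>t. a t - b t)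
      (\<lambda>_. pathstart a - pathstart b)"
    and a_ball: "path_image a \<subseteq> cball ca ra" and b_ball: "path_image b \<subseteq> cball cb rb"
    and far: "ra + 2 * rb < norm ca \<or> rb + 2 * ra < norm cb"
    and conf: "path_image (\<lambda>t. (a t, b t)) \<subseteq> punctured_conf2"
  shows "homotopic_loops punctured_conf2 (\<lambda>t. (a t, b t)) (\<lambda>_. (pathstart a, pathstart b))"
proof -
  have a: "path a" "pathfinish a = pathstart a"
    using homotopic_loops_imp_path[OF null_a] homotopic_loops_imp_loop[OF null_a] by auto
  have b: "path b" "pathfinish b = pathstart b"
    using homotopic_loops_imp_path[OF null_b] homotopic_loops_imp_loop[OF null_b] by auto
  have swap: "continuous_on S (\<lambda>p. (snd p, fst p))"
    "(\<lambda>p. (snd p, fst p)) \<in> punctured_conf2 \<rightarrow> punctured_conf2" for S :: "('a \<times> 'a) set"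
    by (auto simp: punctured_conf2_def intro!: continuous_intros)
  from far show ?thesis
  proof
    assume "ra + 2 * rb < norm ca"
    then show ?thesis
      using homotopic_loops_pair_null_far[OF a null_b null_diff a_ball b_ball _ conf] by blast
  next
    assume far_b: "rb + 2 * ra < norm cb"
    have "homotopic_loops (uminus ` path_image (\<lambda>t. a t - b t)) (uminus \<circ> (\<lambda>t. a t - b t))
        (uminus \<circ> (\<lambda>_. pathstart a - pathstart b))"
      by (rule homotopic_loops_continuous_image[OF null_diff]) (auto intro: continuous_intros)
    then have null_diff': "homotopic_loops (path_image (\<lambda>t. b t - a t)) (\<lambda>t. b t - a t)
        (\<lambda>_. pathstart b - pathstart a)"
      by (simp add: o_def path_image_def image_image)
    have "path_image (\<lambda>t. (b t, a t)) \<subseteq> punctured_conf2"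
      using conf by (auto simp: path_image_def image_subset_iff punctured_conf2_def)
    from homotopic_loops_pair_null_far[OF b null_a null_diff' b_ball a_ball far_b this]
    have "homotopic_loops punctured_conf2 ((\<lambda>p. (snd p, fst p)) \<circ> (\<lambda>t. (b t, a t)))
        ((\<lambda>p. (snd p, fst p)) \<circ> (\<lambda>_. (pathstart b, pathstart a)))"
      using swap by (intro homotopic_loops_continuous_image)
    then show ?thesis by (simp add: o_def)
  qed
qed

section \<open>The loops of the words in T\<close>

definition unit_step :: "nat \<times> bool \<Rightarrow> complex" where
  "unit_step p = (if fst p = 1 then sgn_b (snd p) else \<i> * sgn_b (snd p))"

lemma unit_step_flip: "unit_step (i, \<not> e) = - unit_step (i, e)"
  by (simp add: unit_step_def sgn_b_def)

lemma filter_map_step_x: "filter (\<lambda>v. v \<noteq> 0) (map step_x w) = map unit_step (proj_a w)"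
proof (induction w)
  case (Cons l w)
  then show ?case by (cases l; cases "fst l") (auto simp: proj_a_def unit_step_def sgn_b_def)
qed (simp add: proj_a_def)

lemma filter_map_step_y:
  "filter (\<lambda>v. v \<noteq> 0) (map step_y w) = map (\<lambda>p. - unit_step p) (proj_b w)"
proof (induction w)
  case (Cons l w)
  then show ?case by (cases l; cases "fst l") (auto simp: proj_b_def unit_step_def sgn_b_def)
qed (simp add: proj_b_def)

lemma map_step_x_minus_step_y:
  "map (\<lambda>l. step_x l - step_y l) w = map (\<lambda>p. - unit_step p) (proj_c w)"
proof (induction w)
  case (Cons l w)
  then show ?case by (cases l; cases "fst l") (auto simp: proj_c_def unit_step_def sgn_b_def)
qed (simp add: proj_c_def)

lemma in_T_edge_reductions:
  assumes "in_T w"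
  shows "edge_reduction\<^sup>*\<^sup>* (map step_x w) []" "edge_reduction\<^sup>*\<^sup>* (map step_y w) []"
    and "edge_reduction\<^sup>*\<^sup>* (map (\<lambda>l. step_x l - step_y l) w) []"
proof -
  have proj: "free_trivial (proj_a w)" "free_trivial (proj_b w)" "free_trivial (proj_c w)"
    using assms by (simp_all add: in_T_def)
  have "edge_reduction\<^sup>*\<^sup>* (map unit_step (proj_a w)) []"
    by (rule free_trivial_edge_reductions[OF unit_step_flip proj(1)])
  then show "edge_reduction\<^sup>*\<^sup>* (map step_x w) []"
    using rtranclp_trans[OF edge_reductions_remove_zeros[of "map step_x w"]]
    unfolding filter_map_step_x by blast
  have neg: "edge_reduction\<^sup>*\<^sup>* (map (\<lambda>p. - unit_step p) u) []" if "free_trivial u" for u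
    by (rule free_trivial_edge_reductions[OF _ that]) (simp add: unit_step_flip)
  show "edge_reduction\<^sup>*\<^sup>* (map step_y w) []"
    using rtranclp_trans[OF edge_reductions_remove_zeros[of "map step_y w"]] neg[OF proj(2)]
    unfolding filter_map_step_y by blast
  show "edge_reduction\<^sup>*\<^sup>* (map (\<lambda>l. step_x l - step_y l) w) []"
    using neg[OF proj(3)] by (simp add: map_step_x_minus_step_y)
qed

lemma steps_in_axis_steps:
  "step_x l \<in> axis_steps" "step_y l \<in> axis_steps" "step_x l - step_y l \<in> axis_steps"
  by (cases l; cases "fst l"; cases "snd l"; simp add: axis_steps_def sgn_b_def)+

lemma sum_list_norm_steps:
  "sum_list (map norm (map step_x w)) + sum_list (map norm (map step_y w)) = length w"
proof (induction w)
  case (Cons l w)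
  have "norm (step_x l) + norm (step_y l) = 1"
    by (cases l; cases "fst l"; cases "snd l") (simp_all add: sgn_b_def)
  with Cons show ?case by simp
qed simp

lemma gamma_eq_walks:
  "t \<in> {0..1} \<Longrightarrow>
    gamma px py w t = (walk (hat_x px) (map step_x w) t, walk (hat_y py) (map step_y w) t)"
  by (simp add: gamma_def pl_path_eq_walk)

lemma off_grid_diagonal_shift:
  assumes "gaussian_int p" "\<not> 3 dvd k"
  shows "Re (p + of_int k / 3 * (1 + \<i>)) \<notin> \<int>" "Im (p + of_int k / 3 * (1 + \<i>)) \<notin> \<int>"
proof -
  have "of_int k / (3 :: real) \<notin> \<int>"
  proof
    assume "of_int k / (3 :: real) \<in> \<int>"
    then obtain m where "of_int k / (3 :: real) = of_int m" by (auto elim: Ints_cases)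
    then have "k = 3 * m" by linarith
    with assms(2) show False by simp
  qed
  then show "Re (p + of_int k / 3 * (1 + \<i>)) \<notin> \<int>" "Im (p + of_int k / 3 * (1 + \<i>)) \<notin> \<int>"
    using assms(1) by (simp_all add: gaussian_int_def)
qed

lemma gaussian_int_norm_add_gt:
  assumes "gaussian_int p" "real n < gnorm p" "norm c < 1"
  shows "real n < norm (p + c)"
proof -
  have "gnorm p \<in> \<int>" using assms(1) by (auto simp: gnorm_def gaussian_int_def max_def)
  then obtain m where m: "gnorm p = of_int m" by (auto elim: Ints_cases)
  with assms(2) have "int n + 1 \<le> m" by simp
  then have "real n + 1 \<le> gnorm p"
    unfolding m by (metis of_int_le_iff of_int_of_nat_eq of_int_1 of_int_add)
  also have "gnorm p \<le> norm p" by (simp add: gnorm_def abs_Re_le_cmod abs_Im_le_cmod)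
  finally show ?thesis using norm_triangle_ineq2[of p "- c"] assms(3) by simp
qed

lemma hat_eq_diagonal_shift:
  "hat_x px = px + of_int (-1) / 3 * (1 + \<i>)" "hat_y py = py + of_int 1 / 3 * (1 + \<i>)"
  "hat_x px - hat_y py = (px - py) + of_int (-2) / 3 * (1 + \<i>)"
  by (simp_all add: hat_x_def hat_y_def algebra_simps)

lemma walks_in_punctured_conf2:
  assumes "gaussian_int px" "gaussian_int py"
  shows "path_image (\<lambda>t. (walk (hat_x px) (map step_x w) t, walk (hat_y py) (map step_y w) t))
    \<subseteq> punctured_conf2"
proof -
  have "gaussian_int (px - py)" using assms by (simp add: gaussian_int_def)
  moreover have "\<not> 3 dvd (-1 :: int)" "\<not> 3 dvd (1 :: int)" "\<not> 3 dvd (-2 :: int)" by simp_all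
  ultimately have off_grid:
    "Re (hat_x px) \<notin> \<int>" "Im (hat_x px) \<notin> \<int>" "Re (hat_y py) \<notin> \<int>" "Im (hat_y py) \<notin> \<int>"
    "Re (hat_x px - hat_y py) \<notin> \<int>" "Im (hat_x px - hat_y py) \<notin> \<int>"
    using assms off_grid_diagonal_shift
    unfolding hat_eq_diagonal_shift(3) unfolding hat_eq_diagonal_shift(1,2) by blast+
  have axis: "set (map step_x w) \<subseteq> axis_steps" "set (map step_y w) \<subseteq> axis_steps"
    "set (map (\<lambda>l. step_x l - step_y l) w) \<subseteq> axis_steps"
    using steps_in_axis_steps by auto
  have "walk (hat_x px) (map step_x w) t \<noteq> 0" "walk (hat_y py) (map step_y w) t \<noteq> 0"
    "walk (hat_x px - hat_y py) (map (\<lambda>l. step_x l - step_y l) w) t \<noteq> 0" for t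
    by (rule walk_nonzero_off_grid[OF off_grid(1,2) axis(1)],
        rule walk_nonzero_off_grid[OF off_grid(3,4) axis(2)],
        rule walk_nonzero_off_grid[OF off_grid(5,6) axis(3)])
  then show ?thesis by (auto simp: path_image_def punctured_conf2_def walk_diff[symmetric])
qed

lemma hat_points_far:
  assumes "gaussian_int px" "gaussian_int py" "real (length w) < max (gnorm px) (gnorm py)"
  defines "rx \<equiv> sum_list (map norm (map step_x w)) / 2"
    and "ry \<equiv> sum_list (map norm (map step_y w)) / 2"
  shows "rx + 2 * ry < norm (hat_x px) \<or> ry + 2 * rx < norm (hat_y py)"
proof -
  have small: "norm (of_int (-1) / 3 * (1 + \<i>) :: complex) < 1"
    "norm (of_int 1 / 3 * (1 + \<i>) :: complex) < 1"
    using cmod_le[of "of_int (-1) / 3 * (1 + \<i>)"] cmod_le[of "of_int 1 / 3 * (1 + \<i>)"]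
    by simp_all
  have "real (length w) < norm (hat_x px) \<or> real (length w) < norm (hat_y py)"
    unfolding hat_eq_diagonal_shift
    using assms(3) gaussian_int_norm_add_gt[OF assms(1) _ small(1), where n = "length w"]
      gaussian_int_norm_add_gt[OF assms(2) _ small(2), where n = "length w"]
    by (auto simp: less_max_iff_disj)
  moreover have "0 \<le> rx" "0 \<le> ry" unfolding rx_def ry_def by (auto intro!: sum_list_nonneg)
  ultimately show ?thesis using sum_list_norm_steps[of w] unfolding rx_def ry_def by linarith
qed

theorem lemma4p10:
  fixes w :: "letter list" and px py :: complex
  assumes "in_T w"
    and "gaussian_int px" and "gaussian_int py"
    and "max (gnorm px) (gnorm py) > real (length w)"
  shows "I_trivial px py w"
proof -
  define a where "a = walk (hat_x px) (map step_x w)"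
  define b where "b = walk (hat_y py) (map step_y w)"
  note red = in_T_edge_reductions[OF assms(1)]
  have null: "homotopic_loops (path_image a) a (\<lambda>_. pathstart a)"
    "homotopic_loops (path_image b) b (\<lambda>_. pathstart b)"
    "homotopic_loops (path_image (\<lambda>t. a t - b t)) (\<lambda>t. a t - b t) (\<lambda>_. pathstart a - pathstart b)"
    using edge_reductions_walk_null[OF red(1)] edge_reductions_walk_null[OF red(2)]
      edge_reductions_walk_null[OF red(3)] by (simp_all add: a_def b_def walk_diff)
  have closed: "sum_list (map step_x w) = 0" "sum_list (map step_y w) = 0"
    using edge_reductions_sum_list[OF red(1)] edge_reductions_sum_list[OF red(2)] by simp_all
  have balls: "path_image a \<subseteq> cball (hat_x px) (sum_list (map norm (map step_x w)) / 2)"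
    "path_image b \<subseteq> cball (hat_y py) (sum_list (map norm (map step_y w)) / 2)"
    unfolding a_def b_def
    by (rule path_image_closed_walk[OF closed(1)], rule path_image_closed_walk[OF closed(2)])
  note far = hat_points_far[OF assms(2-4)]
  have "path_image (\<lambda>t. (a t, b t)) \<subseteq> punctured_conf2"
    unfolding a_def b_def by (rule walks_in_punctured_conf2[OF assms(2,3)])
  note pair_null = homotopic_loops_pair_null[OF null balls far this]
  have "homotopic_loops punctured_conf2 (\<lambda>t. (a t, b t)) (gamma px py w)"
    using homotopic_loops_imp_path[OF pair_null] homotopic_loops_imp_subset[OF pair_null]
      homotopic_loops_imp_loop[OF pair_null]
    by (intro homotopic_loops_eq) (auto simp: a_def b_def gamma_eq_walks)
  from homotopic_loops_trans[OF homotopic_loops_sym[OF this] pair_null]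
  show ?thesis
    unfolding I_trivial_def linepath_refl Conf2_punct_eq by (simp add: a_def b_def)
qed

end
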